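(* Let $f:K\to M$ and $g:L\to M$ be group homomorphisms with $f(K)\subseteq g(L)$, let $K\times_ML=\{(k,l)\in K\times L: f(k)=g(l)\}$, $B=\mathrm{Ker}(g)$, and $\iota:B\to K\times_ML$, $\iota(l)=(1_K,l)$. Let $\mathrm{Hom}^f_g(K,L)$ be the set of group homomorphisms $h:K\to L$ with $g\circ h=f$; $B$ acts on it by $h\mapsto l_0hl_0^{-1}$ ($k\mapsto l_0h(k)l_0^{-1}$), and let $\overline{\mathrm{Hom}}^f_g(K,L)$ denote the quotient. For $h\in\mathrm{Hom}^f_g(K,L)$ define $q_h:K\times_ML\to B$ by $q_h(k,l)=l\,h(k)^{-1}$. Then $h\mapsto q_h$ is a bijection from $\mathrm{Hom}^f_g(K,L)$ onto $\mathcal Z^1(\mathsf T^l_\iota,(B,m_B))$, and it induces a bijection $\overline{\mathrm{Hom}}^f_g(K,L)\to\mathsf{Desc}^1(\mathsf T^l_\iota,(B,m_B))$.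
   Context: For an injective group homomorphism $\iota:B\to A$, $\mathcal Z^1(\mathsf T^l_\iota,(B,m_B))$ is identified with the set of maps $q:A\to B$ satisfying (ZL1) $q(1_A)=1_B$; (ZL2) $q(\iota(b)a)=b\,q(a)$ for all $a\in A,b\in B$; (ZL3) $q(aa')=q(a\,\iota(q(a')))$ for all $a,a'\in A$ (the algebra structures on the left $B$-set $B$ for the monad $A\otimes_B-$ on left $B$-sets induced by $\iota$). $\mathsf{Desc}^1(\mathsf T^l_\iota,(B,m_B))$ is its quotient by the relation $q\sim q'$ iff there is $b_0\in B$ with $q(a)b_0=q'(a\,\iota(b_0))$ for all $a\in A$. *)

theory Defs
  imports "HOL-Algebra.Algebra"
begin

definition fibre_prod ::
  "('k,'x) monoid_scheme \<Rightarrow> ('l,'y) monoid_scheme \<Rightarrow> ('m,'z) monoid_scheme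
   \<Rightarrow> ('k \<Rightarrow> 'm) \<Rightarrow> ('l \<Rightarrow> 'm) \<Rightarrow> ('k \<times> 'l) monoid" where
  "fibre_prod K L M f g =
     \<lparr> carrier = {(k, l). k \<in> carrier K \<and> l \<in> carrier L \<and> f k = g l},
       monoid.mult = (\<lambda>p p'. (fst p \<otimes>\<^bsub>K\<^esub> fst p', snd p \<otimes>\<^bsub>L\<^esub> snd p')),
       monoid.one = (\<one>\<^bsub>K\<^esub>, \<one>\<^bsub>L\<^esub>) \<rparr>"

definition ker_group ::
  "('l,'y) monoid_scheme \<Rightarrow> ('m,'z) monoid_scheme \<Rightarrow> ('l \<Rightarrow> 'm) \<Rightarrow> ('l,'y) monoid_scheme" where
  "ker_group L M g = L\<lparr>carrier := kernel L M g\<rparr>"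

definition iota_fp :: "('k,'x) monoid_scheme \<Rightarrow> 'l \<Rightarrow> 'k \<times> 'l" where
  "iota_fp K l = (\<one>\<^bsub>K\<^esub>, l)"

text \<open>Z^1(T^l_iota,(B,m_B)): maps q : A -> B (extensional on carrier A) satisfying ZL1--ZL3.\<close>
definition Z1 ::
  "('a,'x) monoid_scheme \<Rightarrow> ('b,'y) monoid_scheme \<Rightarrow> ('b \<Rightarrow> 'a) \<Rightarrow> ('a \<Rightarrow> 'b) set" where
  "Z1 A B \<iota> = {q. q \<in> carrier A \<rightarrow>\<^sub>E carrier B
      \<and> q \<one>\<^bsub>A\<^esub> = \<one>\<^bsub>B\<^esub>
      \<and> (\<forall>a\<in>carrier A. \<forall>b\<in>carrier B. q (\<iota> b \<otimes>\<^bsub>A\<^esub> a) = b \<otimes>\<^bsub>B\<^esub> q a)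
      \<and> (\<forall>a\<in>carrier A. \<forall>a'\<in>carrier A. q (a \<otimes>\<^bsub>A\<^esub> a') = q (a \<otimes>\<^bsub>A\<^esub> \<iota> (q a')))}"

definition desc_rel ::
  "('a,'x) monoid_scheme \<Rightarrow> ('b,'y) monoid_scheme \<Rightarrow> ('b \<Rightarrow> 'a) \<Rightarrow> (('a \<Rightarrow> 'b) \<times> ('a \<Rightarrow> 'b)) set" where
  "desc_rel A B \<iota> = {(q, q'). q \<in> Z1 A B \<iota> \<and> q' \<in> Z1 A B \<iota> \<and>
      (\<exists>b0\<in>carrier B. \<forall>a\<in>carrier A. q a \<otimes>\<^bsub>B\<^esub> b0 = q' (a \<otimes>\<^bsub>A\<^esub> \<iota> b0))}"

definition Desc1 ::
  "('a,'x) monoid_scheme \<Rightarrow> ('b,'y) monoid_scheme \<Rightarrow> ('b \<Rightarrow> 'a) \<Rightarrow> ('a \<Rightarrow> 'b) set set" where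
  "Desc1 A B \<iota> = Z1 A B \<iota> // desc_rel A B \<iota>"

definition Hom_fg ::
  "('k,'x) monoid_scheme \<Rightarrow> ('l,'y) monoid_scheme \<Rightarrow> ('k \<Rightarrow> 'm) \<Rightarrow> ('l \<Rightarrow> 'm) \<Rightarrow> ('k \<Rightarrow> 'l) set" where
  "Hom_fg K L f g = {h. h \<in> hom K L \<and> h \<in> extensional (carrier K)
      \<and> (\<forall>k\<in>carrier K. g (h k) = f k)}"

definition conj_rel ::
  "('k,'x) monoid_scheme \<Rightarrow> ('l,'y) monoid_scheme \<Rightarrow> ('m,'z) monoid_scheme
   \<Rightarrow> ('k \<Rightarrow> 'm) \<Rightarrow> ('l \<Rightarrow> 'm) \<Rightarrow> (('k \<Rightarrow> 'l) \<times> ('k \<Rightarrow> 'l)) set" where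
  "conj_rel K L M f g = {(h, h'). h \<in> Hom_fg K L f g \<and> h' \<in> Hom_fg K L f g \<and>
      (\<exists>l0\<in>kernel L M g. h' = (\<lambda>k\<in>carrier K. l0 \<otimes>\<^bsub>L\<^esub> h k \<otimes>\<^bsub>L\<^esub> inv\<^bsub>L\<^esub> l0))}"

definition Hom_bar ::
  "('k,'x) monoid_scheme \<Rightarrow> ('l,'y) monoid_scheme \<Rightarrow> ('m,'z) monoid_scheme
   \<Rightarrow> ('k \<Rightarrow> 'm) \<Rightarrow> ('l \<Rightarrow> 'm) \<Rightarrow> ('k \<Rightarrow> 'l) set set" where
  "Hom_bar K L M f g = Hom_fg K L f g // conj_rel K L M f g"

definition q_of ::
  "('k,'x) monoid_scheme \<Rightarrow> ('l,'y) monoid_scheme \<Rightarrow> ('m,'z) monoid_scheme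
   \<Rightarrow> ('k \<Rightarrow> 'm) \<Rightarrow> ('l \<Rightarrow> 'm) \<Rightarrow> ('k \<Rightarrow> 'l) \<Rightarrow> ('k \<times> 'l \<Rightarrow> 'l)" where
  "q_of K L M f g h = (\<lambda>p\<in>carrier (fibre_prod K L M f g).
      snd p \<otimes>\<^bsub>L\<^esub> inv\<^bsub>L\<^esub> (h (fst p)))"

end

theory Submission
  imports Defs
begin

text \<open>
  A homomorphism \<open>h\<close> over \<open>f\<close> is recovered from \<open>q\<^sub>h\<close>: for any \<open>l\<close> with \<open>g l = f k\<close>
  one has \<open>h k = q\<^sub>h(k,l)\<inverse> l\<close>. Conversely, for a cocycle \<open>q\<close> the element \<open>q(k,l)\<inverse> l\<close> does
  not depend on the choice of \<open>l\<close> over \<open>k\<close> by (ZL2), such an \<open>l\<close> exists because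
  \<open>f(K) \<subseteq> g(L)\<close>, (ZL3) makes \<open>k \<mapsto> q(k,l)\<inverse> l\<close> multiplicative, and \<open>g\<close> kills the values
  of \<open>q\<close>, so this defines an inverse of \<open>h \<mapsto> q\<^sub>h\<close>. Conjugation by \<open>l\<^sub>0 \<in> B\<close> is transported
  to the relation \<open>\<sim>\<close> by the identity \<open>q\<^bsub>l\<^sub>0 h l\<^sub>0\<inverse>\<^esub>(a \<iota>(l\<^sub>0\<inverse>)) = q\<^sub>h(a) l\<^sub>0\<inverse>\<close>, and a
  bijection matching two equivalence relations descends to the quotients.
\<close>

lemma bij_betw_Image_class:
  assumes bij: "bij_betw \<phi> A B" and S: "S \<subseteq> B \<times> B"
    and corr: "\<And>x y. x \<in> A \<Longrightarrow> y \<in> A \<Longrightarrow> (x, y) \<in> R \<longleftrightarrow> (\<phi> x, \<phi> y) \<in> S"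
    and x: "x \<in> A" and RA: "R \<subseteq> A \<times> A"
  shows "S``{\<phi> x} = \<phi> ` (R``{x})"
proof
  show "\<phi> ` (R``{x}) \<subseteq> S``{\<phi> x}" using RA corr x by blast
  show "S``{\<phi> x} \<subseteq> \<phi> ` (R``{x})"
  proof
    fix b assume "b \<in> S``{\<phi> x}"
    moreover then obtain y where "y \<in> A" "b = \<phi> y"
      using S bij by (auto simp: bij_betw_def)
    ultimately show "b \<in> \<phi> ` (R``{x})" using corr x by blast
  qed
qed

lemma bij_betw_quotient_Image:
  assumes bij: "bij_betw \<phi> A B" and R: "equiv A R" and S: "S \<subseteq> B \<times> B"
    and corr: "\<And>x y. x \<in> A \<Longrightarrow> y \<in> A \<Longrightarrow> (x, y) \<in> R \<longleftrightarrow> (\<phi> x, \<phi> y) \<in> S"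
  shows "bij_betw (\<lambda>C. S``(\<phi> ` C)) (A//R) (B//S)"
proof -
  have RA: "R \<subseteq> A \<times> A" using R by (rule equiv_type)
  have class_image: "S``{\<phi> x} = \<phi> ` (R``{x})" if "x \<in> A" for x
    using bij_betw_Image_class[OF bij S corr that RA] .
  have fixed: "S``(\<phi> ` (R``{x})) = \<phi> ` (R``{x})" if x: "x \<in> A" for x
  proof -
    have "S``(\<phi> ` (R``{x})) = (\<Union>y\<in>R``{x}. S``{\<phi> y})" by blast
    also have "\<dots> = \<phi> ` (\<Union>y\<in>R``{x}. R``{y})" using class_image RA by blast
    also have "(\<Union>y\<in>R``{x}. R``{y}) = R``{x}"
      using R x by (auto simp: equiv_class_eq_iff equiv_class_self)
    finally show ?thesis .
  qed
  have "bij_betw ((`) \<phi>) (A//R) (B//S)"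
  proof (rule bij_betw_imageI)
    have "C \<subseteq> A" if "C \<in> A//R" for C
      using that RA by (auto elim: quotientE)
    then show "inj_on ((`) \<phi>) (A//R)"
      using bij by (auto simp: bij_betw_def inj_on_def inj_on_image_eq_iff)
    show "(`) \<phi> ` (A//R) = B//S"
      using bij class_image by (auto simp: bij_betw_def quotient_def)
  qed
  moreover have "S``(\<phi> ` C) = \<phi> ` C" if "C \<in> A//R" for C
    using that fixed by (metis quotientE)
  ultimately show ?thesis by (simp cong: bij_betw_cong)
qed

lemma (in group) inv_mult_cancel_left [simp]:
  "x \<in> carrier G \<Longrightarrow> y \<in> carrier G \<Longrightarrow> inv x \<otimes> (x \<otimes> y) = y"
  by (simp flip: m_assoc)

lemma (in group) mult_inv_cancel_left [simp]:
  "x \<in> carrier G \<Longrightarrow> y \<in> carrier G \<Longrightarrow> x \<otimes> (inv x \<otimes> y) = y"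
  by (simp flip: m_assoc)

locale group_fibre_product =
  K: group K + L: group L + M: group M + f: group_hom K M f + g: group_hom L M g
  for K :: "('k,'x) monoid_scheme" and L :: "('l,'y) monoid_scheme"
    and M :: "('m,'z) monoid_scheme" and f and g +
  assumes image_subset: "f ` carrier K \<subseteq> g ` carrier L"
begin

abbreviation "P \<equiv> fibre_prod K L M f g"
abbreviation "B \<equiv> ker_group L M g"
abbreviation "q \<equiv> q_of K L M f g"

lemma fibre_prod_carrier_iff [simp]:
  "(k, l) \<in> carrier P \<longleftrightarrow> k \<in> carrier K \<and> l \<in> carrier L \<and> f k = g l"
  by (simp add: fibre_prod_def)

lemma fibre_prod_mult [simp]: "(k, l) \<otimes>\<^bsub>P\<^esub> (k', l') = (k \<otimes>\<^bsub>K\<^esub> k', l \<otimes>\<^bsub>L\<^esub> l')"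
  by (simp add: fibre_prod_def)

lemma fibre_prod_one [simp]: "\<one>\<^bsub>P\<^esub> = (\<one>\<^bsub>K\<^esub>, \<one>\<^bsub>L\<^esub>)"
  by (simp add: fibre_prod_def)

lemma kernel_iff [simp]: "b \<in> kernel L M g \<longleftrightarrow> b \<in> carrier L \<and> g b = \<one>\<^bsub>M\<^esub>"
  by (simp add: kernel_def)

lemma ker_group_carrier [simp]: "carrier B = kernel L M g"
  by (simp add: ker_group_def)

lemma ker_group_mult [simp]: "b \<otimes>\<^bsub>B\<^esub> b' = b \<otimes>\<^bsub>L\<^esub> b'"
  by (simp add: ker_group_def)

lemma ker_group_one [simp]: "\<one>\<^bsub>B\<^esub> = \<one>\<^bsub>L\<^esub>"
  by (simp add: ker_group_def)

lemma iota_fp_eq [simp]: "iota_fp K b = (\<one>\<^bsub>K\<^esub>, b)"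
  by (simp add: iota_fp_def)

lemma q_of_apply [simp]:
  "(k, l) \<in> carrier P \<Longrightarrow> q h (k, l) = l \<otimes>\<^bsub>L\<^esub> inv\<^bsub>L\<^esub> h k"
  unfolding q_of_def by simp

lemma q_of_extensional: "q h \<in> extensional (carrier P)"
  by (simp add: q_of_def)

lemma exists_lift: "k \<in> carrier K \<Longrightarrow> \<exists>l\<in>carrier L. g l = f k"
  using image_subset by (metis image_iff subsetD)

lemma Hom_fgD:
  assumes "h \<in> Hom_fg K L f g"
  shows "h \<in> extensional (carrier K)" and "group_hom K L h"
    and "k \<in> carrier K \<Longrightarrow> h k \<in> carrier L" and "k \<in> carrier K \<Longrightarrow> g (h k) = f k"
  using assms
  by (auto simp: Hom_fg_def group_hom_def group_hom_axioms_def hom_def K.group_axioms L.group_axioms)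

lemma Hom_fgI:
  assumes "h \<in> extensional (carrier K)" and "\<And>k. k \<in> carrier K \<Longrightarrow> h k \<in> carrier L"
    and "\<And>k k'. k \<in> carrier K \<Longrightarrow> k' \<in> carrier K \<Longrightarrow> h (k \<otimes>\<^bsub>K\<^esub> k') = h k \<otimes>\<^bsub>L\<^esub> h k'"
    and "\<And>k. k \<in> carrier K \<Longrightarrow> g (h k) = f k"
  shows "h \<in> Hom_fg K L f g"
  using assms by (auto simp: Hom_fg_def hom_def)

lemma Z1_fibre_prodI:
  assumes "c \<in> extensional (carrier P)"
    and "\<And>k l. (k, l) \<in> carrier P \<Longrightarrow> c (k, l) \<in> carrier L \<and> g (c (k, l)) = \<one>\<^bsub>M\<^esub>"
    and "c (\<one>\<^bsub>K\<^esub>, \<one>\<^bsub>L\<^esub>) = \<one>\<^bsub>L\<^esub>"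
    and "\<And>k l b. (k, l) \<in> carrier P \<Longrightarrow> b \<in> kernel L M g \<Longrightarrow>
           c (k, b \<otimes>\<^bsub>L\<^esub> l) = b \<otimes>\<^bsub>L\<^esub> c (k, l)"
    and "\<And>k l k' l'. (k, l) \<in> carrier P \<Longrightarrow> (k', l') \<in> carrier P \<Longrightarrow>
           c (k \<otimes>\<^bsub>K\<^esub> k', l \<otimes>\<^bsub>L\<^esub> l') = c (k, l \<otimes>\<^bsub>L\<^esub> c (k', l'))"
  shows "c \<in> Z1 P B (iota_fp K)"
  using assms unfolding Z1_def
  by (auto simp: PiE_def Pi_def Ball_def split_paired_All)

lemma Z1_fibre_prodD:
  assumes "c \<in> Z1 P B (iota_fp K)"
  shows "c \<in> extensional (carrier P)"
    and "(k, l) \<in> carrier P \<Longrightarrow> c (k, l) \<in> carrier L \<and> g (c (k, l)) = \<one>\<^bsub>M\<^esub>"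
    and "(k, l) \<in> carrier P \<Longrightarrow> b \<in> kernel L M g \<Longrightarrow> c (k, b \<otimes>\<^bsub>L\<^esub> l) = b \<otimes>\<^bsub>L\<^esub> c (k, l)"
    and "(k, l) \<in> carrier P \<Longrightarrow> (k', l') \<in> carrier P \<Longrightarrow>
           c (k \<otimes>\<^bsub>K\<^esub> k', l \<otimes>\<^bsub>L\<^esub> l') = c (k, l \<otimes>\<^bsub>L\<^esub> c (k', l'))"
  using assms unfolding Z1_def
  by (auto simp: PiE_def Pi_def Ball_def split_paired_All)

lemma q_of_in_Z1:
  assumes h: "h \<in> Hom_fg K L f g"
  shows "q h \<in> Z1 P B (iota_fp K)"
proof (rule Z1_fibre_prodI)
  interpret h: group_hom K L h using Hom_fgD(2)[OF h] .
  have hL: "\<And>k. k \<in> carrier K \<Longrightarrow> h k \<in> carrier L"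
    and gh: "\<And>k. k \<in> carrier K \<Longrightarrow> g (h k) = f k"
    using Hom_fgD[OF h] by auto
  show "q h \<in> extensional (carrier P)" by (rule q_of_extensional)
  show "q h (k, l) \<in> carrier L \<and> g (q h (k, l)) = \<one>\<^bsub>M\<^esub>" if "(k, l) \<in> carrier P" for k l
    using that hL gh by simp
  show "q h (\<one>\<^bsub>K\<^esub>, \<one>\<^bsub>L\<^esub>) = \<one>\<^bsub>L\<^esub>" by simp
  show "q h (k, b \<otimes>\<^bsub>L\<^esub> l) = b \<otimes>\<^bsub>L\<^esub> q h (k, l)"
    if "(k, l) \<in> carrier P" and "b \<in> kernel L M g" for k l b
    using that hL by (simp add: L.m_assoc)
  show "q h (k \<otimes>\<^bsub>K\<^esub> k', l \<otimes>\<^bsub>L\<^esub> l') = q h (k, l \<otimes>\<^bsub>L\<^esub> q h (k', l'))"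
    if "(k, l) \<in> carrier P" and "(k', l') \<in> carrier P" for k l k' l'
    using that hL gh by (simp add: L.m_assoc L.inv_mult_group)
qed

definition lift :: "'k \<Rightarrow> 'l" where
  "lift k = (SOME l. l \<in> carrier L \<and> g l = f k)"

lemma lift_in_fibre_prod: "k \<in> carrier K \<Longrightarrow> (k, lift k) \<in> carrier P"
  unfolding lift_def using exists_lift by (rule someI2_bex) auto

definition hom_of_cocycle :: "('k \<times> 'l \<Rightarrow> 'l) \<Rightarrow> 'k \<Rightarrow> 'l" where
  "hom_of_cocycle c = (\<lambda>k\<in>carrier K. inv\<^bsub>L\<^esub> c (k, lift k) \<otimes>\<^bsub>L\<^esub> lift k)"

lemma hom_of_cocycle_eq:
  assumes c: "c \<in> Z1 P B (iota_fp K)" and kl: "(k, l) \<in> carrier P"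
  shows "hom_of_cocycle c k = inv\<^bsub>L\<^esub> c (k, l) \<otimes>\<^bsub>L\<^esub> l"
proof -
  have k: "k \<in> carrier K" using kl by simp
  define b where "b = l \<otimes>\<^bsub>L\<^esub> inv\<^bsub>L\<^esub> lift k"
  have b: "b \<in> kernel L M g" and l: "l = b \<otimes>\<^bsub>L\<^esub> lift k"
    using kl lift_in_fibre_prod[OF k] by (auto simp: b_def L.m_assoc)
  have "c (k, l) = b \<otimes>\<^bsub>L\<^esub> c (k, lift k)"
    unfolding l by (rule Z1_fibre_prodD(3)[OF c lift_in_fibre_prod[OF k] b])
  then show ?thesis
    using k b lift_in_fibre_prod[OF k] Z1_fibre_prodD(2)[OF c lift_in_fibre_prod[OF k]]
    by (simp add: hom_of_cocycle_def l L.inv_mult_group L.m_assoc)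
qed

lemma hom_of_cocycle_in_Hom_fg:
  assumes c: "c \<in> Z1 P B (iota_fp K)"
  shows "hom_of_cocycle c \<in> Hom_fg K L f g"
proof (rule Hom_fgI)
  note c_closed = Z1_fibre_prodD(2)[OF c] and h_eval = hom_of_cocycle_eq[OF c]
  show "hom_of_cocycle c \<in> extensional (carrier K)" by (simp add: hom_of_cocycle_def)
  show "hom_of_cocycle c k \<in> carrier L" and "g (hom_of_cocycle c k) = f k"
    if k: "k \<in> carrier K" for k
    using h_eval[OF lift_in_fibre_prod[OF k]] c_closed[OF lift_in_fibre_prod[OF k]]
      lift_in_fibre_prod[OF k]
    by simp_all
  show "hom_of_cocycle c (k \<otimes>\<^bsub>K\<^esub> k') = hom_of_cocycle c k \<otimes>\<^bsub>L\<^esub> hom_of_cocycle c k'"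
    if k: "k \<in> carrier K" and k': "k' \<in> carrier K" for k k'
  proof -
    let ?l = "lift k" and ?l' = "lift k'"
    let ?d = "c (k', ?l')"
    have kl: "(k, ?l) \<in> carrier P" and kl': "(k', ?l') \<in> carrier P"
      using lift_in_fibre_prod k k' by auto
    then have d: "?d \<in> carrier L" "g ?d = \<one>\<^bsub>M\<^esub>" using c_closed by auto
    then have kld: "(k, ?l \<otimes>\<^bsub>L\<^esub> ?d) \<in> carrier P" using kl by simp
    have kk': "(k \<otimes>\<^bsub>K\<^esub> k', ?l \<otimes>\<^bsub>L\<^esub> ?l') \<in> carrier P" using kl kl' by simp
    have "hom_of_cocycle c (k \<otimes>\<^bsub>K\<^esub> k') = inv\<^bsub>L\<^esub> c (k, ?l \<otimes>\<^bsub>L\<^esub> ?d) \<otimes>\<^bsub>L\<^esub> (?l \<otimes>\<^bsub>L\<^esub> ?l')"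
      using h_eval[OF kk'] Z1_fibre_prodD(4)[OF c kl kl'] by simp
    also have "\<dots> = (inv\<^bsub>L\<^esub> c (k, ?l \<otimes>\<^bsub>L\<^esub> ?d) \<otimes>\<^bsub>L\<^esub> (?l \<otimes>\<^bsub>L\<^esub> ?d)) \<otimes>\<^bsub>L\<^esub> (inv\<^bsub>L\<^esub> ?d \<otimes>\<^bsub>L\<^esub> ?l')"
      using kl kl' d c_closed[OF kld] by (simp add: L.m_assoc)
    also have "\<dots> = hom_of_cocycle c k \<otimes>\<^bsub>L\<^esub> hom_of_cocycle c k'"
      using h_eval[OF kld] h_eval[OF kl'] by simp
    finally show ?thesis .
  qed
qed

lemma hom_of_cocycle_q_of:
  assumes h: "h \<in> Hom_fg K L f g"
  shows "hom_of_cocycle (q h) = h"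
proof (rule extensionalityI)
  show "hom_of_cocycle (q h) \<in> extensional (carrier K)" by (simp add: hom_of_cocycle_def)
  show "h \<in> extensional (carrier K)" using Hom_fgD(1)[OF h] .
  show "hom_of_cocycle (q h) k = h k" if k: "k \<in> carrier K" for k
    using hom_of_cocycle_eq[OF q_of_in_Z1[OF h] lift_in_fibre_prod[OF k]]
      lift_in_fibre_prod[OF k] Hom_fgD(3)[OF h k]
    by (simp add: L.inv_mult_group L.m_assoc)
qed

lemma q_of_hom_of_cocycle:
  assumes c: "c \<in> Z1 P B (iota_fp K)"
  shows "q (hom_of_cocycle c) = c"
proof (rule extensionalityI)
  show "q (hom_of_cocycle c) \<in> extensional (carrier P)" by (rule q_of_extensional)
  show "c \<in> extensional (carrier P)" using Z1_fibre_prodD(1)[OF c] .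
  show "q (hom_of_cocycle c) p = c p" if "p \<in> carrier P" for p
  proof (cases p)
    case (Pair k l)
    with that have kl: "(k, l) \<in> carrier P" by simp
    then show ?thesis
      using Pair hom_of_cocycle_eq[OF c kl] Z1_fibre_prodD(2)[OF c kl]
      by (simp add: L.inv_mult_group L.m_assoc)
  qed
qed

lemma bij_betw_q_of: "bij_betw q (Hom_fg K L f g) (Z1 P B (iota_fp K))"
  by (rule bij_betwI[where g = hom_of_cocycle])
    (auto simp: q_of_in_Z1 hom_of_cocycle_in_Hom_fg hom_of_cocycle_q_of q_of_hom_of_cocycle)

definition conj_by :: "'l \<Rightarrow> ('k \<Rightarrow> 'l) \<Rightarrow> 'k \<Rightarrow> 'l" where
  "conj_by l0 h = (\<lambda>k\<in>carrier K. l0 \<otimes>\<^bsub>L\<^esub> h k \<otimes>\<^bsub>L\<^esub> inv\<^bsub>L\<^esub> l0)"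

lemma conj_rel_iff:
  "(h, h') \<in> conj_rel K L M f g \<longleftrightarrow>
     h \<in> Hom_fg K L f g \<and> h' \<in> Hom_fg K L f g \<and> (\<exists>l0\<in>kernel L M g. h' = conj_by l0 h)"
  unfolding conj_rel_def conj_by_def by blast

lemma conj_by_in_Hom_fg:
  assumes h: "h \<in> Hom_fg K L f g" and l0: "l0 \<in> kernel L M g"
  shows "conj_by l0 h \<in> Hom_fg K L f g"
proof (rule Hom_fgI)
  interpret h: group_hom K L h using Hom_fgD(2)[OF h] .
  show "conj_by l0 h \<in> extensional (carrier K)" by (simp add: conj_by_def)
  show "conj_by l0 h k \<in> carrier L" and "g (conj_by l0 h k) = f k" if "k \<in> carrier K" for k
    using that l0 Hom_fgD(3,4)[OF h] by (simp_all add: conj_by_def)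
  show "conj_by l0 h (k \<otimes>\<^bsub>K\<^esub> k') = conj_by l0 h k \<otimes>\<^bsub>L\<^esub> conj_by l0 h k'"
    if "k \<in> carrier K" and "k' \<in> carrier K" for k k'
    using that l0 Hom_fgD(3)[OF h] by (simp add: conj_by_def L.m_assoc)
qed

lemma conj_by_one: "h \<in> Hom_fg K L f g \<Longrightarrow> conj_by \<one>\<^bsub>L\<^esub> h = h"
  by (rule extensionalityI[OF _ Hom_fgD(1)]) (auto simp: conj_by_def Hom_fgD(3))

lemma conj_by_conj_by:
  "h \<in> Hom_fg K L f g \<Longrightarrow> l0 \<in> carrier L \<Longrightarrow> l1 \<in> carrier L \<Longrightarrow>
     conj_by l1 (conj_by l0 h) = conj_by (l1 \<otimes>\<^bsub>L\<^esub> l0) h"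
  by (auto simp: conj_by_def Hom_fgD(3) L.m_assoc L.inv_mult_group)

lemma equiv_conj_rel: "equiv (Hom_fg K L f g) (conj_rel K L M f g)"
proof (rule equivI)
  show "conj_rel K L M f g \<subseteq> Hom_fg K L f g \<times> Hom_fg K L f g"
    by (auto simp: conj_rel_def)
  show "refl_on (Hom_fg K L f g) (conj_rel K L M f g)"
  proof (rule refl_onI)
    fix h assume h: "h \<in> Hom_fg K L f g"
    have "\<one>\<^bsub>L\<^esub> \<in> kernel L M g" by simp
    with h show "(h, h) \<in> conj_rel K L M f g"
      unfolding conj_rel_iff using conj_by_one[OF h] by metis
  qed
  show "sym (conj_rel K L M f g)"
  proof (rule symI)
    fix h h' assume "(h, h') \<in> conj_rel K L M f g"
    then obtain l0 where hh': "h \<in> Hom_fg K L f g" "h' \<in> Hom_fg K L f g"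
      and l0: "l0 \<in> kernel L M g" and h': "h' = conj_by l0 h"
      unfolding conj_rel_iff by blast
    have "h = conj_by (inv\<^bsub>L\<^esub> l0) h'"
      using hh' l0 by (simp add: h' conj_by_conj_by conj_by_one)
    moreover have "inv\<^bsub>L\<^esub> l0 \<in> kernel L M g" using l0 by simp
    ultimately show "(h', h) \<in> conj_rel K L M f g"
      unfolding conj_rel_iff using hh' by blast
  qed
  show "trans (conj_rel K L M f g)"
  proof (rule transI)
    fix h h' h'' assume "(h, h') \<in> conj_rel K L M f g" "(h', h'') \<in> conj_rel K L M f g"
    then obtain l0 l1 where hh'': "h \<in> Hom_fg K L f g" "h'' \<in> Hom_fg K L f g"
      and l0: "l0 \<in> kernel L M g" and l1: "l1 \<in> kernel L M g"
      and "h' = conj_by l0 h" "h'' = conj_by l1 h'"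
      unfolding conj_rel_iff by blast
    then have "h'' = conj_by (l1 \<otimes>\<^bsub>L\<^esub> l0) h" by (simp add: conj_by_conj_by)
    moreover have "l1 \<otimes>\<^bsub>L\<^esub> l0 \<in> kernel L M g" using l0 l1 by simp
    ultimately show "(h, h'') \<in> conj_rel K L M f g"
      unfolding conj_rel_iff using hh'' by blast
  qed
qed

lemma q_of_conj_by:
  assumes h: "h \<in> Hom_fg K L f g" and l0: "l0 \<in> kernel L M g" and kl: "(k, l) \<in> carrier P"
  shows "q (conj_by l0 h) (k, l \<otimes>\<^bsub>L\<^esub> inv\<^bsub>L\<^esub> l0) = q h (k, l) \<otimes>\<^bsub>L\<^esub> inv\<^bsub>L\<^esub> l0"
  using l0 kl Hom_fgD(3)[OF h]
  by (simp add: conj_by_def L.m_assoc L.inv_mult_group)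

lemma conj_rel_iff_desc_rel:
  assumes h: "h \<in> Hom_fg K L f g" and h': "h' \<in> Hom_fg K L f g"
  shows "(h, h') \<in> conj_rel K L M f g \<longleftrightarrow> (q h, q h') \<in> desc_rel P B (iota_fp K)"
proof
  assume "(h, h') \<in> conj_rel K L M f g"
  then obtain l0 where l0: "l0 \<in> kernel L M g" and h'_eq: "h' = conj_by l0 h"
    unfolding conj_rel_iff by blast
  have "q h a \<otimes>\<^bsub>B\<^esub> inv\<^bsub>L\<^esub> l0 = q h' (a \<otimes>\<^bsub>P\<^esub> iota_fp K (inv\<^bsub>L\<^esub> l0))"
    if "a \<in> carrier P" for a
    using that q_of_conj_by[OF h l0] by (cases a) (simp add: h'_eq)
  moreover have "inv\<^bsub>L\<^esub> l0 \<in> carrier B" using l0 by simp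
  ultimately show "(q h, q h') \<in> desc_rel P B (iota_fp K)"
    unfolding desc_rel_def using q_of_in_Z1[OF h] q_of_in_Z1[OF h'] by blast
next
  assume "(q h, q h') \<in> desc_rel P B (iota_fp K)"
  then obtain b0 where b0_B: "b0 \<in> carrier B"
    and eq: "\<forall>a\<in>carrier P. q h a \<otimes>\<^bsub>B\<^esub> b0 = q h' (a \<otimes>\<^bsub>P\<^esub> iota_fp K b0)"
    unfolding desc_rel_def by blast
  have b0: "b0 \<in> kernel L M g" using b0_B by simp
  have inv_b0: "inv\<^bsub>L\<^esub> b0 \<in> kernel L M g" using b0 by simp
  have "q h' = q (conj_by (inv\<^bsub>L\<^esub> b0) h)"
  proof (rule extensionalityI[OF q_of_extensional q_of_extensional])
    fix p assume "p \<in> carrier P"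
    then obtain k l where p: "p = (k, l)" and kl: "(k, l) \<in> carrier P" by (cases p) auto
    then have kl0: "(k, l \<otimes>\<^bsub>L\<^esub> inv\<^bsub>L\<^esub> b0) \<in> carrier P" using b0 by simp
    have shift: "(k, l \<otimes>\<^bsub>L\<^esub> inv\<^bsub>L\<^esub> b0) \<otimes>\<^bsub>P\<^esub> iota_fp K b0 = p"
      using kl b0 p by (simp add: L.m_assoc)
    have "q h' p = q h (k, l \<otimes>\<^bsub>L\<^esub> inv\<^bsub>L\<^esub> b0) \<otimes>\<^bsub>B\<^esub> b0"
      using bspec[OF eq kl0] unfolding shift by (rule sym)
    also have "\<dots> = q (conj_by (inv\<^bsub>L\<^esub> b0) h) p"
      using q_of_conj_by[OF h inv_b0 kl0] kl b0 p by (simp add: L.m_assoc)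
    finally show "q h' p = q (conj_by (inv\<^bsub>L\<^esub> b0) h) p" .
  qed
  then have "h' = conj_by (inv\<^bsub>L\<^esub> b0) h"
    using hom_of_cocycle_q_of h' conj_by_in_Hom_fg[OF h inv_b0] by metis
  then show "(h, h') \<in> conj_rel K L M f g"
    unfolding conj_rel_iff using h h' inv_b0 by blast
qed

end

theorem mainTheorem19:
  fixes K :: "('k,'x) monoid_scheme" and L :: "('l,'y) monoid_scheme"
    and M :: "('m,'z) monoid_scheme"
    and f :: "'k \<Rightarrow> 'm" and g :: "'l \<Rightarrow> 'm"
  assumes "group K" and "group L" and "group M"
    and "f \<in> hom K M" and "g \<in> hom L M"
    and "f ` carrier K \<subseteq> g ` carrier L"
  shows "bij_betw (q_of K L M f g) (Hom_fg K L f g)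
           (Z1 (fibre_prod K L M f g) (ker_group L M g) (iota_fp K))
       \<and> (\<forall>h\<in>Hom_fg K L f g. \<forall>h'\<in>Hom_fg K L f g.
            (h, h') \<in> conj_rel K L M f g \<longleftrightarrow>
            (q_of K L M f g h, q_of K L M f g h')
              \<in> desc_rel (fibre_prod K L M f g) (ker_group L M g) (iota_fp K))
       \<and> bij_betw
           (\<lambda>C. Image (desc_rel (fibre_prod K L M f g) (ker_group L M g) (iota_fp K))
                  (q_of K L M f g ` C))
           (Hom_bar K L M f g)
           (Desc1 (fibre_prod K L M f g) (ker_group L M g) (iota_fp K))"
proof -
  interpret group_fibre_product K L M f g
    by (intro group_fibre_product.intro group_fibre_product_axioms.intro group_hom.intro
        group_hom_axioms.intro assms)
  let ?P = "fibre_prod K L M f g" and ?B = "ker_group L M g"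
  have corr: "\<And>h h'. h \<in> Hom_fg K L f g \<Longrightarrow> h' \<in> Hom_fg K L f g \<Longrightarrow>
      (h, h') \<in> conj_rel K L M f g \<longleftrightarrow>
      (q_of K L M f g h, q_of K L M f g h') \<in> desc_rel ?P ?B (iota_fp K)"
    by (rule conj_rel_iff_desc_rel)
  have "desc_rel ?P ?B (iota_fp K) \<subseteq> Z1 ?P ?B (iota_fp K) \<times> Z1 ?P ?B (iota_fp K)"
    by (auto simp: desc_rel_def)
  then have "bij_betw (\<lambda>C. desc_rel ?P ?B (iota_fp K) `` (q_of K L M f g ` C))
      (Hom_bar K L M f g) (Desc1 ?P ?B (iota_fp K))"
    unfolding Hom_bar_def Desc1_def
    using bij_betw_quotient_Image[OF bij_betw_q_of equiv_conj_rel _ corr] by blast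
  with bij_betw_q_of corr show ?thesis by blast
qed

end
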